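(* Let $V$ be a finite-dimensional real vector space with a Lorentzian inner product $g$, and let $V=E_1\oplus\cdots\oplus E_r$ ($r\ge 1$) be a $g$-orthogonal direct sum of subspaces on each of which $g$ is non-degenerate, with $E_r$ Lorentzian. For $1\le\beta\le r$ let $g_\beta$ be the symmetric bilinear form $g_\beta(X,Y)=g(X_\beta,Y_\beta)$, where $X_\beta,Y_\beta$ are the $E_\beta$-components of $X,Y$. Let $p\in E_r$ be a non-zero light-like vector and $\theta=g(p,\cdot)$. Let $\bar g_1=g,\bar g_2,\dots,\bar g_{r+1}$ be linearly independent symmetric bilinear forms on $V$ of the form $$\bar g_\alpha=\sum_{\beta=1}^r C_{\beta\alpha}g_\beta+C_{r+1\,\alpha}\,\theta\otimes\theta,\qquad C_{\beta\alpha}\in\mathbb{R},$$ and assume $C_{r\alpha}=0$ for all $2\le\alpha\le r+1$. Let $2\le\alpha\le r+1$. If $C_{r+1\,\alpha}=0$, then $$\ker\bar g_\alpha=\bigoplus_{1\le\beta\le r,\ C_{\beta\alpha}=0}E_\beta\quad\text{and}\quad \ker\big(g|_{\ker\bar g_\alpha\times\ker\bar g_\alpha}\big)=0.$$ If $C_{r+1\,\alpha}\neq0$, then $$\ker\bar g_\alpha=\bigoplus_{1\le\beta\le r-1,\ C_{\beta\alpha}=0}E_\beta\ \oplus\ \{X\in E_r\mid\theta(X)=0\}\quad\text{and}\quad \ker\big(g|_{\ker\bar g_\alpha\times\ker\bar g_\alpha}\big)=\mathbb{R}p.$$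
   Context: For a symmetric bilinear form $b$ on $V$, $\ker b=\{X\in V\mid b(X,Y)=0\ \forall Y\in V\}$. For a subspace $U$, $g|_{U\times U}$ denotes the restriction of $g$ to $U$ and $\ker(g|_{U\times U})=\{X\in U\mid g(X,Y)=0\ \forall Y\in U\}$. (In the paper, $V=T_xM$ for a Lorentzian manifold and the $E_\beta$ come from its Wu decomposition; the forms $\bar g_\alpha$ are a basis of parallel symmetric bilinear forms evaluated at $x$.) *)

theory Defs
  imports "HOL-Analysis.Analysis"
begin

definition sym_form :: "('v \<Rightarrow> 'v \<Rightarrow> real) \<Rightarrow> bool" where
  "sym_form b \<longleftrightarrow> (\<forall>x y. b x y = b y x)"

definition form_ker :: "('v \<Rightarrow> 'v \<Rightarrow> real) \<Rightarrow> 'v set" where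
  "form_ker b = {X. \<forall>Y. b X Y = 0}"

definition restr_ker :: "('v \<Rightarrow> 'v \<Rightarrow> real) \<Rightarrow> 'v set \<Rightarrow> 'v set" where
  "restr_ker b U = {X \<in> U. \<forall>Y\<in>U. b X Y = 0}"

definition nondegenerate_on :: "'v::zero set \<Rightarrow> ('v \<Rightarrow> 'v \<Rightarrow> real) \<Rightarrow> bool" where
  "nondegenerate_on U b \<longleftrightarrow> restr_ker b U \<subseteq> {0}"

text \<open>Lorentzian: non-degenerate with index exactly 1 (signature (-,+,...,+)).\<close>
definition lorentzian_on :: "'v::euclidean_space set \<Rightarrow> ('v \<Rightarrow> 'v \<Rightarrow> real) \<Rightarrow> bool" where
  "lorentzian_on U b \<longleftrightarrow> subspace U \<and> nondegenerate_on U b \<and>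
     (\<exists>x\<in>U. b x x < 0) \<and>
     (\<forall>W. subspace W \<and> W \<subseteq> U \<and> (\<forall>x\<in>W. x \<noteq> 0 \<longrightarrow> b x x < 0) \<longrightarrow> dim W \<le> 1)"

definition decomp_fun :: "(nat \<Rightarrow> 'v::real_vector set) \<Rightarrow> nat \<Rightarrow> 'v \<Rightarrow> (nat \<Rightarrow> 'v) \<Rightarrow> bool" where
  "decomp_fun E r X f \<longleftrightarrow> (\<forall>\<beta>\<in>{1..r}. f \<beta> \<in> E \<beta>) \<and> (\<forall>\<beta>. \<beta> \<notin> {1..r} \<longrightarrow> f \<beta> = 0)
      \<and> X = (\<Sum>\<beta>=1..r. f \<beta>)"

definition direct_sum :: "(nat \<Rightarrow> 'v::real_vector set) \<Rightarrow> nat \<Rightarrow> bool" where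
  "direct_sum E r \<longleftrightarrow> (\<forall>\<beta>\<in>{1..r}. subspace (E \<beta>)) \<and> (\<forall>X. \<exists>!f. decomp_fun E r X f)"

definition component :: "(nat \<Rightarrow> 'v::real_vector set) \<Rightarrow> nat \<Rightarrow> nat \<Rightarrow> 'v \<Rightarrow> 'v" where
  "component E r \<beta> X = (THE f. decomp_fun E r X f) \<beta>"

definition g_part :: "('v::real_vector \<Rightarrow> 'v \<Rightarrow> real) \<Rightarrow> (nat \<Rightarrow> 'v set) \<Rightarrow> nat \<Rightarrow> nat \<Rightarrow> 'v \<Rightarrow> 'v \<Rightarrow> real" where
  "g_part g E r \<beta> X Y = g (component E r \<beta> X) (component E r \<beta> Y)"

definition gbar :: "('v::real_vector \<Rightarrow> 'v \<Rightarrow> real) \<Rightarrow> (nat \<Rightarrow> 'v set) \<Rightarrow> nat \<Rightarrow> 'v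
     \<Rightarrow> (nat \<Rightarrow> nat \<Rightarrow> real) \<Rightarrow> nat \<Rightarrow> 'v \<Rightarrow> 'v \<Rightarrow> real" where
  "gbar g E r p C \<alpha> X Y = (\<Sum>\<beta>=1..r. C \<beta> \<alpha> * g_part g E r \<beta> X Y) + C (r+1) \<alpha> * (g p X * g p Y)"

definition forms_lin_indep :: "(nat \<Rightarrow> 'v \<Rightarrow> 'v \<Rightarrow> real) \<Rightarrow> nat \<Rightarrow> bool" where
  "forms_lin_indep B n \<longleftrightarrow>
     (\<forall>c. (\<forall>X Y. (\<Sum>\<alpha>=1..n. c \<alpha> * B \<alpha> X Y) = 0) \<longrightarrow> (\<forall>\<alpha>\<in>{1..n}. c \<alpha> = 0))"

end

theory Submission
  imports Defs
begin

(* Test gbar_alpha(X, -) against one summand E_beta at a time. For beta < r the form theta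
   vanishes on E_beta, so only C_beta_alpha g(X_beta, -) survives; on E_r, where C_r_alpha = 0,
   only C_(r+1)_alpha theta(X) theta survives. Non-degeneracy of g on each summand then yields
   the kernel. The radical of g on the kernel meets every summand E_beta contained in it
   trivially, and inside E_r the radical of g on the hyperplane ker theta = p^perp is Rp,
   because p is null. *)

locale internal_direct_sum =
  fixes E :: "nat \<Rightarrow> 'v::real_vector set" and r :: nat
  assumes direct_sum: "direct_sum E r"
begin

lemma subspace_summand: "\<beta> \<in> {1..r} \<Longrightarrow> subspace (E \<beta>)"
  using direct_sum unfolding direct_sum_def by auto

lemma decomp_fun_component: "decomp_fun E r X (\<lambda>\<beta>. component E r \<beta> X)"
proof -
  have "\<exists>!f. decomp_fun E r X f" using direct_sum unfolding direct_sum_def by auto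
  then show ?thesis unfolding component_def by (rule theI')
qed

lemma component_eqI: "decomp_fun E r X f \<Longrightarrow> component E r \<beta> X = f \<beta>"
  using direct_sum decomp_fun_component[of X] unfolding direct_sum_def by metis

lemma component_in_summand: "\<beta> \<in> {1..r} \<Longrightarrow> component E r \<beta> X \<in> E \<beta>"
  using decomp_fun_component[of X] unfolding decomp_fun_def by blast

lemma sum_components: "(\<Sum>\<beta>=1..r. component E r \<beta> X) = X"
  using decomp_fun_component[of X] unfolding decomp_fun_def by simp

lemma component_of_summand:
  assumes "\<gamma> \<in> {1..r}" and "Y \<in> E \<gamma>"
  shows "component E r \<beta> Y = (if \<beta> = \<gamma> then Y else 0)"
proof (rule component_eqI)
  have "\<forall>\<beta>\<in>{1..r}. 0 \<in> E \<beta>" using subspace_summand subspace_0 by blast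
  then show "decomp_fun E r Y (\<lambda>\<beta>. if \<beta> = \<gamma> then Y else 0)"
    unfolding decomp_fun_def using assms by (auto simp: sum.delta)
qed

lemma linear_component: "linear (component E r \<beta>)"
proof (rule linearI)
  fix x y
  have "decomp_fun E r (x + y) (\<lambda>\<beta>. component E r \<beta> x + component E r \<beta> y)"
    unfolding decomp_fun_def
    using decomp_fun_component[of x] decomp_fun_component[of y]
    by (auto simp: decomp_fun_def sum.distrib subspace_summand component_in_summand subspace_add)
  then show "component E r \<beta> (x + y) = component E r \<beta> x + component E r \<beta> y"
    by (rule component_eqI)
next
  fix c x
  have "decomp_fun E r (c *\<^sub>R x) (\<lambda>\<beta>. c *\<^sub>R component E r \<beta> x)"
    unfolding decomp_fun_def
    using decomp_fun_component[of x]
    by (auto simp: decomp_fun_def scaleR_sum_right[symmetric] subspace_summand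
        component_in_summand subspace_scale)
  then show "component E r \<beta> (c *\<^sub>R x) = c *\<^sub>R component E r \<beta> x"
    by (rule component_eqI)
qed

lemma in_span_if_components_in_span:
  "(\<And>\<beta>. \<beta> \<in> {1..r} \<Longrightarrow> component E r \<beta> X \<in> span A) \<Longrightarrow> X \<in> span A"
  using span_sum[of "{1..r}" "\<lambda>\<beta>. component E r \<beta> X" A] sum_components[of X] by simp

lemma eq_0_if_components_eq_0: "(\<And>\<beta>. \<beta> \<in> {1..r} \<Longrightarrow> component E r \<beta> X = 0) \<Longrightarrow> X = 0"
  using sum_components[of X] by simp

lemma eq_component_if_other_components_eq_0:
  assumes \<gamma>: "\<gamma> \<in> {1..r}" and others: "\<And>\<beta>. \<beta> \<in> {1..r} \<Longrightarrow> \<beta> \<noteq> \<gamma> \<Longrightarrow> component E r \<beta> X = 0"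
  shows "X = component E r \<gamma> X"
proof -
  have "X = (\<Sum>\<beta>=1..r. component E r \<beta> X)" by (simp only: sum_components)
  also have "\<dots> = (\<Sum>\<beta>=1..r. if \<beta> = \<gamma> then component E r \<gamma> X else 0)"
    using others by (intro sum.cong) auto
  also have "\<dots> = component E r \<gamma> X" using \<gamma> by (simp add: sum.delta)
  finally show ?thesis .
qed

definition zero_coeff_part :: "(nat \<Rightarrow> real) \<Rightarrow> 'v set" where
  "zero_coeff_part c = {X. \<forall>\<beta>\<in>{1..r}. c \<beta> \<noteq> 0 \<longrightarrow> component E r \<beta> X = 0}"

lemma subspace_zero_coeff_part: "subspace (zero_coeff_part c)"
  using linear_component
  unfolding subspace_def zero_coeff_part_def by (auto simp: linear_0 linear_add linear_cmul)

lemma summand_subset_zero_coeff_part: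
  "\<beta> \<in> {1..r} \<Longrightarrow> c \<beta> = 0 \<Longrightarrow> E \<beta> \<subseteq> zero_coeff_part c"
  unfolding zero_coeff_part_def using component_of_summand by auto

lemma span_zero_coeff_summands:
  "span (\<Union>\<beta>\<in>{\<beta>\<in>{1..r}. c \<beta> = 0}. E \<beta>) = zero_coeff_part c"
proof (rule span_subspace)
  show "(\<Union>\<beta>\<in>{\<beta>\<in>{1..r}. c \<beta> = 0}. E \<beta>) \<subseteq> zero_coeff_part c"
    using summand_subset_zero_coeff_part by blast
  show "zero_coeff_part c \<subseteq> span (\<Union>\<beta>\<in>{\<beta>\<in>{1..r}. c \<beta> = 0}. E \<beta>)"
  proof
    fix X assume X: "X \<in> zero_coeff_part c"
    show "X \<in> span (\<Union>\<beta>\<in>{\<beta>\<in>{1..r}. c \<beta> = 0}. E \<beta>)"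
    proof (rule in_span_if_components_in_span)
      fix \<beta> assume \<beta>: "\<beta> \<in> {1..r}"
      show "component E r \<beta> X \<in> span (\<Union>\<beta>\<in>{\<beta>\<in>{1..r}. c \<beta> = 0}. E \<beta>)"
        using X \<beta> component_in_summand[OF \<beta>]
        by (cases "c \<beta> = 0") (auto simp: zero_coeff_part_def span_zero intro: span_base)
    qed
  qed
qed (rule subspace_zero_coeff_part)

end

locale orthogonal_decomposition = internal_direct_sum E r
  for E :: "nat \<Rightarrow> 'v::real_vector set" and r +
  fixes g :: "'v \<Rightarrow> 'v \<Rightarrow> real"
  assumes bilinear: "bilinear g" and symmetric: "sym_form g"
    and orthogonal: "\<forall>\<beta>\<in>{1..r}. \<forall>\<gamma>\<in>{1..r}. \<beta> \<noteq> \<gamma> \<longrightarrow> (\<forall>X\<in>E \<beta>. \<forall>Y\<in>E \<gamma>. g X Y = 0)"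
    and nondegenerate: "\<forall>\<beta>\<in>{1..r}. nondegenerate_on (E \<beta>) g"
begin

lemma form_commute: "g X Y = g Y X"
  using symmetric unfolding sym_form_def by blast

lemma form_component_left:
  assumes \<gamma>: "\<gamma> \<in> {1..r}" and Y: "Y \<in> E \<gamma>"
  shows "g X Y = g (component E r \<gamma> X) Y"
proof -
  have "linear (\<lambda>X. g X Y)" using bilinear by (simp add: bilinear_def)
  then have "g (\<Sum>\<beta>=1..r. component E r \<beta> X) Y = (\<Sum>\<beta>=1..r. g (component E r \<beta> X) Y)"
    by (rule linear_sum)
  then have "g X Y = (\<Sum>\<beta>=1..r. g (component E r \<beta> X) Y)"
    by (simp only: sum_components)
  also have "\<dots> = (\<Sum>\<beta>=1..r. if \<beta> = \<gamma> then g (component E r \<gamma> X) Y else 0)"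
    using orthogonal \<gamma> Y component_in_summand by (intro sum.cong) auto
  also have "\<dots> = g (component E r \<gamma> X) Y"
    using \<gamma> by (simp add: sum.delta)
  finally show ?thesis .
qed

lemma component_eq_0_if_orthogonal:
  assumes \<beta>: "\<beta> \<in> {1..r}" and "\<forall>Y\<in>E \<beta>. g X Y = 0"
  shows "component E r \<beta> X = 0"
proof -
  have "g (component E r \<beta> X) Y = 0" if "Y \<in> E \<beta>" for Y
    using assms(2) form_component_left[OF \<beta> that, of X] that by simp
  then have "component E r \<beta> X \<in> restr_ker g (E \<beta>)"
    using component_in_summand[OF \<beta>] unfolding restr_ker_def by blast
  then show ?thesis
    using nondegenerate \<beta> unfolding nondegenerate_on_def by blast
qed

lemma component_eq_0_if_in_restr_ker:
  "\<beta> \<in> {1..r} \<Longrightarrow> E \<beta> \<subseteq> K \<Longrightarrow> X \<in> restr_ker g K \<Longrightarrow> component E r \<beta> X = 0"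
  by (rule component_eq_0_if_orthogonal) (auto simp: restr_ker_def)

lemma restr_ker_zero_coeff_part: "restr_ker g (zero_coeff_part c) = {0}"
proof
  show "restr_ker g (zero_coeff_part c) \<subseteq> {0}"
  proof
    fix X assume X: "X \<in> restr_ker g (zero_coeff_part c)"
    have "component E r \<beta> X = 0" if \<beta>: "\<beta> \<in> {1..r}" for \<beta>
    proof (cases "c \<beta> = 0")
      case True
      then show ?thesis
        using component_eq_0_if_in_restr_ker[OF \<beta> summand_subset_zero_coeff_part[OF \<beta>] X] by simp
    next
      case False
      then show ?thesis using X \<beta> by (simp add: restr_ker_def zero_coeff_part_def)
    qed
    then show "X \<in> {0}" using eq_0_if_components_eq_0 by simp
  qed
  show "{0} \<subseteq> restr_ker g (zero_coeff_part c)"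
    using subspace_zero_coeff_part subspace_0 bilinear_lzero[OF bilinear]
    by (auto simp: restr_ker_def)
qed

lemma gbar_summand:
  assumes \<gamma>: "\<gamma> \<in> {1..r}" and Y: "Y \<in> E \<gamma>"
  shows "gbar g E r p C \<alpha> X Y = C \<gamma> \<alpha> * g (component E r \<gamma> X) Y + C (r+1) \<alpha> * (g p X * g p Y)"
proof -
  have "(\<Sum>\<beta>=1..r. C \<beta> \<alpha> * g_part g E r \<beta> X Y)
      = (\<Sum>\<beta>=1..r. if \<beta> = \<gamma> then C \<gamma> \<alpha> * g (component E r \<gamma> X) Y else 0)"
    unfolding g_part_def using component_of_summand[OF \<gamma> Y] bilinear_rzero[OF bilinear]
    by (intro sum.cong) auto
  then show ?thesis
    using \<gamma> unfolding gbar_def by (simp add: sum.delta)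
qed

end

locale null_vector_in_last_summand = orthogonal_decomposition E r g
  for E :: "nat \<Rightarrow> 'v::real_vector set" and r and g +
  fixes p :: 'v
  assumes r_pos: "r \<ge> 1"
    and p_in: "p \<in> E r" and p_nz: "p \<noteq> 0" and p_null: "g p p = 0"
begin

lemma last_index: "r \<in> {1..r}"
  using r_pos by simp

lemma theta_other_summand: "\<gamma> \<in> {1..r} \<Longrightarrow> \<gamma> \<noteq> r \<Longrightarrow> Y \<in> E \<gamma> \<Longrightarrow> g p Y = 0"
  using orthogonal last_index p_in by metis

lemma theta_component: "g p X = g p (component E r r X)"
  using form_component_left[OF last_index p_in, of X] form_commute by metis

lemma ex_theta_nonzero: "\<exists>Y\<in>E r. g p Y \<noteq> 0"
proof (rule ccontr)
  assume "\<not> ?thesis"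
  then have "component E r r p = 0"
    using component_eq_0_if_orthogonal[OF last_index] by auto
  then show False
    using component_of_summand[OF last_index p_in, of r] p_nz by simp
qed

lemma mem_line_if_orthogonal_to_ker_theta:
  assumes Z: "Z \<in> E r" and orth_ker: "\<forall>Y\<in>E r. g p Y = 0 \<longrightarrow> g Z Y = 0"
  shows "Z \<in> range (\<lambda>t. t *\<^sub>R p)"
proof -
  obtain Y\<^sub>0 where Y\<^sub>0: "Y\<^sub>0 \<in> E r" "g p Y\<^sub>0 \<noteq> 0" using ex_theta_nonzero by blast
  define t where "t = g Z Y\<^sub>0 / g p Y\<^sub>0"
  have sub: "subspace (E r)" using subspace_summand[OF last_index] .
  have "g (Z - t *\<^sub>R p) Y = 0" if Y: "Y \<in> E r" for Y
  proof -
    define Y' where "Y' = Y - (g p Y / g p Y\<^sub>0) *\<^sub>R Y\<^sub>0"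
    have "Y' \<in> E r" unfolding Y'_def using sub Y Y\<^sub>0 by (simp add: subspace_diff subspace_scale)
    moreover have "g p Y' = 0"
      unfolding Y'_def using Y\<^sub>0 by (simp add: bilinear_rsub[OF bilinear] bilinear_rmul[OF bilinear])
    ultimately have "g Z Y' = 0" using orth_ker by blast
    then show ?thesis
      unfolding Y'_def t_def
      by (simp add: bilinear_rsub[OF bilinear] bilinear_rmul[OF bilinear]
          bilinear_lsub[OF bilinear] bilinear_lmul[OF bilinear] field_simps)
  qed
  then have "component E r r (Z - t *\<^sub>R p) = 0"
    by (intro component_eq_0_if_orthogonal[OF last_index]) blast
  moreover have "Z - t *\<^sub>R p \<in> E r" using sub Z p_in by (simp add: subspace_diff subspace_scale)
  ultimately have "Z = t *\<^sub>R p" using component_of_summand[OF last_index] by auto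
  then show ?thesis by blast
qed

lemma form_ker_gbar:
  assumes Cr: "C r \<alpha> = 0"
  shows "form_ker (gbar g E r p C \<alpha>)
       = zero_coeff_part (\<lambda>\<beta>. C \<beta> \<alpha>) \<inter> {X. C (r+1) \<alpha> * g p X = 0}"
proof (intro set_eqI iffI)
  fix X assume "X \<in> form_ker (gbar g E r p C \<alpha>)"
  then have X: "gbar g E r p C \<alpha> X Y = 0" for Y by (simp add: form_ker_def)
  have "component E r \<beta> X = 0" if \<beta>: "\<beta> \<in> {1..r}" and C\<beta>: "C \<beta> \<alpha> \<noteq> 0" for \<beta>
  proof (rule component_eq_0_if_orthogonal[OF \<beta>], intro ballI)
    fix Y assume Y: "Y \<in> E \<beta>"
    have "\<beta> \<noteq> r" using C\<beta> Cr by auto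
    then have "C \<beta> \<alpha> * g (component E r \<beta> X) Y = 0"
      using X[of Y] gbar_summand[OF \<beta> Y, of p C \<alpha> X] theta_other_summand[OF \<beta> _ Y] by simp
    then show "g X Y = 0"
      using C\<beta> form_component_left[OF \<beta> Y, of X] by simp
  qed
  moreover obtain Y where "Y \<in> E r" "g p Y \<noteq> 0" using ex_theta_nonzero by blast
  then have "C (r+1) \<alpha> * g p X = 0"
    using X[of Y] gbar_summand[OF last_index, of Y p C \<alpha> X] Cr by simp
  ultimately show "X \<in> zero_coeff_part (\<lambda>\<beta>. C \<beta> \<alpha>) \<inter> {X. C (r+1) \<alpha> * g p X = 0}"
    by (simp add: zero_coeff_part_def)
next
  fix X assume X: "X \<in> zero_coeff_part (\<lambda>\<beta>. C \<beta> \<alpha>) \<inter> {X. C (r+1) \<alpha> * g p X = 0}"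
  have "gbar g E r p C \<alpha> X Y = 0" for Y
  proof -
    have "(\<Sum>\<beta>=1..r. C \<beta> \<alpha> * g_part g E r \<beta> X Y) = 0"
      using X bilinear_lzero[OF bilinear]
      by (intro sum.neutral) (auto simp: zero_coeff_part_def g_part_def)
    then show ?thesis using X by (auto simp: gbar_def)
  qed
  then show "X \<in> form_ker (gbar g E r p C \<alpha>)" by (simp add: form_ker_def)
qed

lemma span_zero_coeff_ker_theta:
  assumes cr: "c r = 0"
  shows "span ((\<Union>\<beta>\<in>{\<beta>\<in>{1..r-1}. c \<beta> = 0}. E \<beta>) \<union> {X \<in> E r. g p X = 0})
       = zero_coeff_part c \<inter> {X. g p X = 0}"
    (is "span ?A = ?K")
proof (rule span_subspace)
  have "E \<beta> \<subseteq> ?K" if "\<beta> \<in> {1..r-1}" "c \<beta> = 0" for \<beta>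
    using that summand_subset_zero_coeff_part theta_other_summand by force
  moreover have "{X \<in> E r. g p X = 0} \<subseteq> ?K"
    using summand_subset_zero_coeff_part[of r c] last_index cr by blast
  ultimately show "?A \<subseteq> ?K" by blast
  show "?K \<subseteq> span ?A"
  proof
    fix X assume X: "X \<in> ?K"
    show "X \<in> span ?A"
    proof (rule in_span_if_components_in_span)
      fix \<beta> assume \<beta>: "\<beta> \<in> {1..r}"
      show "component E r \<beta> X \<in> span ?A"
      proof (cases "\<beta> = r")
        case True
        have "component E r r X \<in> {X \<in> E r. g p X = 0}"
          using X theta_component[of X] component_in_summand[OF last_index] by simp
        then show ?thesis using True by (blast intro: span_base)
      next
        case False
        then have \<beta>': "\<beta> \<in> {1..r-1}" using \<beta> by auto
        show ?thesis
        proof (cases "c \<beta> = 0")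
          case True
          then show ?thesis using \<beta>' component_in_summand[OF \<beta>] by (blast intro: span_base)
        next
          case False
          then show ?thesis using X \<beta> by (simp add: zero_coeff_part_def span_zero)
        qed
      qed
    qed
  qed
  show "subspace ?K"
    using subspace_zero_coeff_part linear_subspace_kernel bilinear
    by (intro subspace_inter) (auto simp: bilinear_def)
qed


lemma restr_ker_zero_coeff_ker_theta:
  assumes cr: "c r = 0"
  shows "restr_ker g (zero_coeff_part c \<inter> {X. g p X = 0}) = range (\<lambda>t. t *\<^sub>R p)"
    (is "restr_ker g ?K = _")
proof
  have Er: "{Y \<in> E r. g p Y = 0} \<subseteq> ?K"
    using summand_subset_zero_coeff_part[of r c] last_index cr by blast
  show "restr_ker g ?K \<subseteq> range (\<lambda>t. t *\<^sub>R p)"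
  proof
    fix X assume X: "X \<in> restr_ker g ?K"
    have "component E r \<beta> X = 0" if \<beta>: "\<beta> \<in> {1..r}" "\<beta> \<noteq> r" for \<beta>
    proof (cases "c \<beta> = 0")
      case True
      have "E \<beta> \<subseteq> ?K"
        using summand_subset_zero_coeff_part[of \<beta> c] \<beta>(1) True theta_other_summand[OF \<beta>] by blast
      then show ?thesis by (rule component_eq_0_if_in_restr_ker[OF \<beta>(1) _ X])
    next
      case False
      then show ?thesis using X \<beta> by (simp add: restr_ker_def zero_coeff_part_def)
    qed
    then have "X = component E r r X"
      by (intro eq_component_if_other_components_eq_0[OF last_index])
    moreover have "component E r r X \<in> range (\<lambda>t. t *\<^sub>R p)"
    proof (rule mem_line_if_orthogonal_to_ker_theta[OF component_in_summand[OF last_index]], intro ballI impI)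
      fix Y assume "Y \<in> E r" "g p Y = 0"
      then have "g X Y = 0" using X Er unfolding restr_ker_def by blast
      then show "g (component E r r X) Y = 0"
        using form_component_left[OF last_index \<open>Y \<in> E r\<close>, of X] by simp
    qed
    ultimately show "X \<in> range (\<lambda>t. t *\<^sub>R p)" by simp
  qed
  show "range (\<lambda>t. t *\<^sub>R p) \<subseteq> restr_ker g ?K"
  proof
    fix Z assume "Z \<in> range (\<lambda>t. t *\<^sub>R p)"
    then obtain t where Z: "Z = t *\<^sub>R p" by blast
    have "Z \<in> E r" unfolding Z using subspace_summand[OF last_index] p_in by (rule subspace_scale)
    moreover have "g p Z = 0" unfolding Z using p_null by (simp add: bilinear_rmul[OF bilinear])
    ultimately have "Z \<in> ?K" using Er by blast
    moreover have "g Z Y = 0" if "Y \<in> ?K" for Y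
      using that unfolding Z by (simp add: bilinear_lmul[OF bilinear])
    ultimately show "Z \<in> restr_ker g ?K" by (simp add: restr_ker_def)
  qed
qed

end

theorem lemma1:
  fixes g :: "'v::euclidean_space \<Rightarrow> 'v \<Rightarrow> real"
    and E :: "nat \<Rightarrow> 'v set" and r :: nat and p :: 'v
    and C :: "nat \<Rightarrow> nat \<Rightarrow> real" and \<alpha> :: nat
  assumes g_bil: "bilinear g" and g_sym: "sym_form g"
    and g_lor: "lorentzian_on UNIV g"
    and r_pos: "r \<ge> 1"
    and dsum: "direct_sum E r"
    and orth: "\<forall>\<beta>\<in>{1..r}. \<forall>\<gamma>\<in>{1..r}. \<beta> \<noteq> \<gamma> \<longrightarrow> (\<forall>X\<in>E \<beta>. \<forall>Y\<in>E \<gamma>. g X Y = 0)"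
    and nondeg: "\<forall>\<beta>\<in>{1..r}. nondegenerate_on (E \<beta>) g"
    and Er_lor: "lorentzian_on (E r) g"
    and p_in: "p \<in> E r" and p_nz: "p \<noteq> 0" and p_null: "g p p = 0"
    and gbar1: "\<forall>X Y. gbar g E r p C 1 X Y = g X Y"
    and indep: "forms_lin_indep (gbar g E r p C) (r + 1)"
    and Cr0: "\<forall>\<alpha>'\<in>{2..r+1}. C r \<alpha>' = 0"
    and \<alpha>_range: "\<alpha> \<in> {2..r+1}"
  shows "(C (r+1) \<alpha> = 0 \<longrightarrow>
            form_ker (gbar g E r p C \<alpha>) = span (\<Union>\<beta>\<in>{\<beta>\<in>{1..r}. C \<beta> \<alpha> = 0}. E \<beta>)
          \<and> restr_ker g (form_ker (gbar g E r p C \<alpha>)) = {0})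
       \<and> (C (r+1) \<alpha> \<noteq> 0 \<longrightarrow>
            form_ker (gbar g E r p C \<alpha>) =
              span ((\<Union>\<beta>\<in>{\<beta>\<in>{1..r-1}. C \<beta> \<alpha> = 0}. E \<beta>) \<union> {X \<in> E r. g p X = 0})
          \<and> restr_ker g (form_ker (gbar g E r p C \<alpha>)) = range (\<lambda>t. t *\<^sub>R p))"
proof -
  interpret null_vector_in_last_summand E r g p
    using dsum g_bil g_sym orth nondeg r_pos p_in p_nz p_null by unfold_locales
  have Cr: "C r \<alpha> = 0" using Cr0 \<alpha>_range by blast
  note ker = form_ker_gbar[of C \<alpha>, OF Cr]
  have "form_ker (gbar g E r p C \<alpha>) = zero_coeff_part (\<lambda>\<beta>. C \<beta> \<alpha>)" if "C (r+1) \<alpha> = 0"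
    using ker that by simp
  moreover have "form_ker (gbar g E r p C \<alpha>) = zero_coeff_part (\<lambda>\<beta>. C \<beta> \<alpha>) \<inter> {X. g p X = 0}"
    if "C (r+1) \<alpha> \<noteq> 0"
    using ker that by simp
  ultimately show ?thesis
    using span_zero_coeff_summands restr_ker_zero_coeff_part
      span_zero_coeff_ker_theta[of "\<lambda>\<beta>. C \<beta> \<alpha>", OF Cr]
      restr_ker_zero_coeff_ker_theta[of "\<lambda>\<beta>. C \<beta> \<alpha>", OF Cr]
    by simp
qed

end
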